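(* Let $R$ be an integral domain whose unit group contains an element different from $1$, and let $\varphi$ be an automorphism of $\overline{\mathbf{A}_4(R)}=\mathbf{A}_4(R)/\mathbf{U}_4(R)'$. Then there exist a permutation $\sigma$ of the set $\{(1,2),(2,3),(3,4)\}$ and automorphisms $\Phi_{1,2},\Phi_{2,3},\Phi_{3,4}$ of the additive group $(R,+)$ such that $\varphi(\bar e_{i,j}(r))=\bar e_{\sigma(i,j)}(\Phi_{i,j}(r))$ for all $(i,j)\in\{(1,2),(2,3),(3,4)\}$ and all $r\in R$.
   Context: $\mathbf{A}_4(R)$ is the group of upper triangular $4\times4$ matrices over $R$ with diagonal $(1,u_2,u_3,1)$, $u_2,u_3\in U(R)$; $\mathbf{U}_4(R)$ its subgroup of upper unitriangular matrices and $\mathbf{U}_4(R)'$ the commutator subgroup of $\mathbf{U}_4(R)$. For $i<j$ and $r\in R$, $e_{i,j}(r)$ is the unitriangular matrix with $(i,j)$-entry $r$ and all other off-diagonal entries $0$, and $\bar e_{i,j}(r)$ its image in $\overline{\mathbf{A}_4(R)}$; for a pair $(k,l)$ we write $\bar e_{(k,l)}=\bar e_{k,l}$. *)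

theory Defs
  imports "HOL-Algebra.Algebra" "HOL-Combinatorics.Permutations"
begin

text \<open>4x4 matrices over a ring are functions nat => nat => 'a, indexed by 1..4,
  and required to vanish outside the index range (so equality is matrix equality).\<close>

definition mat4_mult :: "(nat \<Rightarrow> nat \<Rightarrow> 'a::comm_ring_1) \<Rightarrow> (nat \<Rightarrow> nat \<Rightarrow> 'a) \<Rightarrow> (nat \<Rightarrow> nat \<Rightarrow> 'a)" where
  "mat4_mult A B = (\<lambda>i j. if i \<in> {1..4} \<and> j \<in> {1..4} then (\<Sum>k\<in>{1..4}. A i k * B k j) else 0)"

definition mat4_one :: "nat \<Rightarrow> nat \<Rightarrow> 'a::comm_ring_1" where
  "mat4_one = (\<lambda>i j. if i \<in> {1..4} \<and> i = j then 1 else 0)"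

definition A4_carrier :: "(nat \<Rightarrow> nat \<Rightarrow> 'a::comm_ring_1) set" where
  "A4_carrier = {M. (\<forall>i j. (i \<notin> {1..4} \<or> j \<notin> {1..4}) \<longrightarrow> M i j = 0)
                    \<and> (\<forall>i j. j < i \<longrightarrow> M i j = 0)
                    \<and> M 1 1 = 1 \<and> M 4 4 = 1 \<and> M 2 2 dvd 1 \<and> M 3 3 dvd 1}"

definition A4 :: "(nat \<Rightarrow> nat \<Rightarrow> 'a::comm_ring_1) monoid" where
  "A4 = \<lparr>carrier = A4_carrier, monoid.mult = mat4_mult, one = mat4_one\<rparr>"

definition U4 :: "(nat \<Rightarrow> nat \<Rightarrow> 'a::comm_ring_1) monoid" where
  "U4 = A4\<lparr>carrier := {M \<in> A4_carrier. M 2 2 = 1 \<and> M 3 3 = 1}\<rparr>"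

definition U4' :: "(nat \<Rightarrow> nat \<Rightarrow> 'a::comm_ring_1) set" where
  "U4' = derived U4 (carrier U4)"

definition A4bar :: "(nat \<Rightarrow> nat \<Rightarrow> 'a::comm_ring_1) set monoid" where
  "A4bar = A4 Mod U4'"

definition elem :: "nat \<Rightarrow> nat \<Rightarrow> 'a::comm_ring_1 \<Rightarrow> (nat \<Rightarrow> nat \<Rightarrow> 'a)" where
  "elem i j r = (\<lambda>a b. if a \<in> {1..4} \<and> a = b then 1 else if a = i \<and> b = j then r else 0)"

definition elem_bar :: "nat \<Rightarrow> nat \<Rightarrow> 'a::comm_ring_1 \<Rightarrow> (nat \<Rightarrow> nat \<Rightarrow> 'a) set" where
  "elem_bar i j r = U4' #>\<^bsub>A4\<^esub> elem i j r"

end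

theory Submission
  imports Defs
begin

(*
  Modulo U4(R)' only the entries (1,2), (2,3), (3,4) and the two diagonal units of a matrix survive,
  so A4(R)/U4(R)' is the group of tuples (a, d, g, u, v) with the multiplication read off from the
  matrix product (first isomorphism theorem for the coordinate map). Over an integral domain the image
  of U4(R) in this group is characterised intrinsically as the set of elements commuting with all
  their conjugates, and its intersection with a centralizer is either all of it, one of the three
  root subgroups {e12(r)}, {e23(r)}, {e34(r)}, or trivial; each root subgroup occurs, as the
  centralizer of a diagonal matrix built from a unit w other than 1. An automorphism preserves both
  notions, hence permutes the three root subgroups, and on each of them it is an additive bijection
  of R.
*)

section \<open>Group-theoretic invariants of isomorphisms\<close>

definition centralizer :: "('a, 'b) monoid_scheme \<Rightarrow> 'a \<Rightarrow> 'a set" where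
  "centralizer G g = {x \<in> carrier G. x \<otimes>\<^bsub>G\<^esub> g = g \<otimes>\<^bsub>G\<^esub> x}"

text \<open>Elements commuting with each of their conjugates; \<open>y \<otimes> g = g \<otimes> x\<close> says
  \<open>y = g x g\<inverse>\<close> without mentioning inverses.\<close>

definition conj_commuting :: "('a, 'b) monoid_scheme \<Rightarrow> 'a set" where
  "conj_commuting G = {x \<in> carrier G. \<forall>g\<in>carrier G. \<forall>y\<in>carrier G.
     y \<otimes>\<^bsub>G\<^esub> g = g \<otimes>\<^bsub>G\<^esub> x \<longrightarrow> x \<otimes>\<^bsub>G\<^esub> y = y \<otimes>\<^bsub>G\<^esub> x}"

lemma image_eq_if_mem_iff:
  assumes "f ` A = B" "S \<subseteq> A" "T \<subseteq> B" "\<And>x. x \<in> A \<Longrightarrow> f x \<in> T \<longleftrightarrow> x \<in> S"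
  shows "f ` S = T"
  using assms by blast

lemma iso_mult_eq_iff:
  assumes "monoid G" "h \<in> iso G H"
    and "x \<in> carrier G" "y \<in> carrier G" "x' \<in> carrier G" "y' \<in> carrier G"
  shows "h x \<otimes>\<^bsub>H\<^esub> h y = h x' \<otimes>\<^bsub>H\<^esub> h y' \<longleftrightarrow> x \<otimes>\<^bsub>G\<^esub> y = x' \<otimes>\<^bsub>G\<^esub> y'"
proof -
  have "h x \<otimes>\<^bsub>H\<^esub> h y = h (x \<otimes>\<^bsub>G\<^esub> y)" "h x' \<otimes>\<^bsub>H\<^esub> h y' = h (x' \<otimes>\<^bsub>G\<^esub> y')"
    by (simp_all add: hom_mult[OF iso_imp_homomorphism[OF assms(2)]] assms)
  moreover have "x \<otimes>\<^bsub>G\<^esub> y \<in> carrier G" "x' \<otimes>\<^bsub>G\<^esub> y' \<in> carrier G"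
    using assms by (simp_all add: monoid.m_closed)
  ultimately show ?thesis
    using assms(2) by (auto simp: iso_def bij_betw_def dest: inj_onD)
qed

lemma iso_image_centralizer:
  assumes "monoid G" "h \<in> iso G H" "g \<in> carrier G"
  shows "h ` centralizer G g = centralizer H (h g)"
proof (rule image_eq_if_mem_iff)
  show onto: "h ` carrier G = carrier H"
    using assms(2) by (simp add: iso_iff)
  show "centralizer G g \<subseteq> carrier G" "centralizer H (h g) \<subseteq> carrier H"
    by (auto simp: centralizer_def)
  show "h x \<in> centralizer H (h g) \<longleftrightarrow> x \<in> centralizer G g" if "x \<in> carrier G" for x
    using that onto iso_mult_eq_iff[OF assms(1,2) that assms(3) assms(3) that]
    by (auto simp: centralizer_def)
qed

lemma iso_image_conj_commuting:
  assumes "monoid G" "h \<in> iso G H"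
  shows "h ` conj_commuting G = conj_commuting H"
proof (rule image_eq_if_mem_iff)
  show onto: "h ` carrier G = carrier H"
    using assms(2) by (simp add: iso_iff)
  show "conj_commuting G \<subseteq> carrier G" "conj_commuting H \<subseteq> carrier H"
    by (auto simp: conj_commuting_def)
  fix x
  assume x: "x \<in> carrier G"
  have "h x \<in> conj_commuting H \<longleftrightarrow> (\<forall>g\<in>carrier G. \<forall>y\<in>carrier G.
      h y \<otimes>\<^bsub>H\<^esub> h g = h g \<otimes>\<^bsub>H\<^esub> h x \<longrightarrow> h x \<otimes>\<^bsub>H\<^esub> h y = h y \<otimes>\<^bsub>H\<^esub> h x)"
    unfolding conj_commuting_def onto[symmetric] Ball_image_comp comp_def using x by simp
  also have "\<dots> \<longleftrightarrow> x \<in> conj_commuting G"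
    unfolding conj_commuting_def using x iso_mult_eq_iff[OF assms] by simp
  finally show "h x \<in> conj_commuting H \<longleftrightarrow> x \<in> conj_commuting G" .
qed

lemma iso_transport_aut:
  assumes "group G" "\<psi> \<in> iso G H" "\<phi> \<in> iso G G"
  shows "\<psi> \<circ> \<phi> \<circ> inv_into (carrier G) \<psi> \<in> iso H H"
proof -
  have "\<phi> \<circ> inv_into (carrier G) \<psi> \<in> iso H G"
    using iso_set_trans[OF group.iso_set_sym[OF assms(1,2)] assms(3)] .
  from iso_set_trans[OF this assms(2)] show ?thesis
    by (simp add: o_assoc)
qed

lemma (in group_hom) image_kernel_rcoset: "g \<in> carrier G \<Longrightarrow> h ` (kernel G H h #> g) = {h g}"
proof -
  assume "g \<in> carrier G"
  then have "g \<in> kernel G H h #> g"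
    by (simp add: G.rcos_self subgroup_kernel)
  with \<open>g \<in> carrier G\<close> show ?thesis
    by (auto simp: kernel_def r_coset_def)
qed

section \<open>Coordinates on \<open>A\<^sub>4(R)\<close>\<close>

definition A4_mat :: "'a::comm_ring_1 \<Rightarrow> 'a \<Rightarrow> 'a \<Rightarrow> 'a \<Rightarrow> 'a \<Rightarrow> 'a \<Rightarrow> 'a \<Rightarrow> 'a \<Rightarrow> nat \<Rightarrow> nat \<Rightarrow> 'a" where
  "A4_mat a b c d e g u v = (\<lambda>i j.
     if i = 1 \<and> j = 1 then 1 else if i = 1 \<and> j = 2 then a
     else if i = 1 \<and> j = 3 then b else if i = 1 \<and> j = 4 then c
     else if i = 2 \<and> j = 2 then u else if i = 2 \<and> j = 3 then d else if i = 2 \<and> j = 4 then e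
     else if i = 3 \<and> j = 3 then v else if i = 3 \<and> j = 4 then g else if i = 4 \<and> j = 4 then 1 else 0)"

lemma index4_cases: "(i::nat) = 1 \<or> i = 2 \<or> i = 3 \<or> i = 4 \<or> i \<notin> {1..4}"
  by auto

lemma sum_index4: "(\<Sum>k\<in>{1..4::nat}. f k) = f 1 + f 2 + f 3 + f 4"
proof -
  have "{1..4::nat} = {1, 2, 3, 4}" by auto
  then show ?thesis by (simp add: algebra_simps)
qed

lemma mat4_eqI:
  fixes A B :: "nat \<Rightarrow> nat \<Rightarrow> 'a"
  assumes "\<And>i j. i \<in> {1, 2, 3, 4} \<Longrightarrow> j \<in> {1, 2, 3, 4} \<Longrightarrow> A i j = B i j"
    and "\<And>i j. i \<notin> {1..4} \<or> j \<notin> {1..4} \<Longrightarrow> A i j = B i j"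
  shows "A = B"
proof (intro ext)
  fix i j :: nat
  show "A i j = B i j"
    using assms index4_cases[of i] index4_cases[of j] by blast
qed

lemma A4_mat_mult:
  "mat4_mult (A4_mat a b c d e g u v) (A4_mat a' b' c' d' e' g' u' v') =
   A4_mat (a' + a * u') (b' + a * d' + b * v') (c' + a * e' + b * g' + c)
     (u * d' + d * v') (u * e' + d * g' + e) (v * g' + g) (u * u') (v * v')"
  unfolding mat4_mult_def sum_index4
  by (rule mat4_eqI) (auto simp: A4_mat_def algebra_simps)

lemma A4_mat_eq_iff:
  "A4_mat a b c d e g u v = A4_mat a' b' c' d' e' g' u' v' \<longleftrightarrow>
   a = a' \<and> b = b' \<and> c = c' \<and> d = d' \<and> e = e' \<and> g = g' \<and> u = u' \<and> v = v'"
proof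
  assume eq: "A4_mat a b c d e g u v = A4_mat a' b' c' d' e' g' u' v'"
  have "A4_mat a b c d e g u v i j = A4_mat a' b' c' d' e' g' u' v' i j" for i j
    using eq by simp
  from this[of 1 2] this[of 1 3] this[of 1 4] this[of 2 3] this[of 2 4] this[of 3 4]
    this[of 2 2] this[of 3 3]
  show "a = a' \<and> b = b' \<and> c = c' \<and> d = d' \<and> e = e' \<and> g = g' \<and> u = u' \<and> v = v'"
    by (simp add: A4_mat_def)
qed simp

lemma A4_mat_in_carrier_iff: "A4_mat a b c d e g u v \<in> A4_carrier \<longleftrightarrow> u dvd 1 \<and> v dvd 1"
  unfolding A4_carrier_def by (auto simp: A4_mat_def)

lemma A4_mat_apply:
  "A4_mat a b c d e g u v 1 1 = 1" "A4_mat a b c d e g u v 1 2 = a"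
  "A4_mat a b c d e g u v 1 3 = b" "A4_mat a b c d e g u v 1 4 = c"
  "A4_mat a b c d e g u v 2 2 = u" "A4_mat a b c d e g u v 2 3 = d"
  "A4_mat a b c d e g u v 2 4 = e" "A4_mat a b c d e g u v 3 3 = v"
  "A4_mat a b c d e g u v 3 4 = g" "A4_mat a b c d e g u v 4 4 = 1"
  "j < i \<Longrightarrow> A4_mat a b c d e g u v i j = 0"
  "i \<notin> {1..4} \<or> j \<notin> {1..4} \<Longrightarrow> A4_mat a b c d e g u v i j = 0"
  by (auto simp: A4_mat_def)

lemma A4_mat_entries:
  assumes "M \<in> A4_carrier"
  shows "M = A4_mat (M 1 2) (M 1 3) (M 1 4) (M 2 3) (M 2 4) (M 3 4) (M 2 2) (M 3 3)"
proof (intro ext)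
  have outside: "\<And>i j. i \<notin> {1..4} \<or> j \<notin> {1..4} \<Longrightarrow> M i j = 0"
    and lower: "\<And>i j. j < i \<Longrightarrow> M i j = 0" and diag: "M 1 1 = 1" "M 4 4 = 1"
    using assms unfolding A4_carrier_def by simp_all
  fix i j :: nat
  show "M i j = A4_mat (M 1 2) (M 1 3) (M 1 4) (M 2 3) (M 2 4) (M 3 4) (M 2 2) (M 3 3) i j"
    using index4_cases[of i] index4_cases[of j]
    \<comment> \<open>\<open>One_nat_def\<close> would rewrite the index \<open>1\<close> to \<open>Suc 0\<close> and block \<open>A4_mat_apply\<close>.\<close>
    by (elim disjE) (simp_all add: A4_mat_apply outside lower diag del: One_nat_def)
qed

lemma A4_carrierE:
  assumes "M \<in> A4_carrier"
  obtains a b c d e g u v u' v' where "M = A4_mat a b c d e g u v" "u * u' = 1" "v * v' = 1"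
proof -
  from assms have "M 2 2 dvd 1" "M 3 3 dvd 1"
    by (simp_all add: A4_carrier_def)
  then obtain u' v' where "M 2 2 * u' = 1" "M 3 3 * v' = 1"
    by (metis dvdE)
  with A4_mat_entries[OF assms] show thesis
    by (rule that)
qed

lemma mat4_one_eq: "mat4_one = A4_mat 0 0 0 0 0 0 1 1"
  by (rule mat4_eqI) (auto simp: A4_mat_def mat4_one_def)

lemma elem_eq:
  "elem 1 2 r = A4_mat r 0 0 0 0 0 1 1"
  "elem 2 3 r = A4_mat 0 0 0 r 0 0 1 1"
  "elem 3 4 r = A4_mat 0 0 0 0 0 r 1 1"
  by (rule mat4_eqI; auto simp: A4_mat_def elem_def)+

definition A4_mat_inv ::
    "'a::comm_ring_1 \<Rightarrow> 'a \<Rightarrow> 'a \<Rightarrow> 'a \<Rightarrow> 'a \<Rightarrow> 'a \<Rightarrow> 'a \<Rightarrow> 'a \<Rightarrow> nat \<Rightarrow> nat \<Rightarrow> 'a" where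
  "A4_mat_inv a b c d e g u' v' =
     A4_mat (- a * u') ((a * u' * d - b) * v') (- (c - a * u' * e + (a * u' * d - b) * v' * g))
       (- d * u' * v') (u' * d * v' * g - u' * e) (- g * v') u' v'"

lemma A4_mat_inv_mult:
  assumes "u * u' = 1" "v * v' = 1"
  shows "mat4_mult (A4_mat_inv a b c d e g u' v') (A4_mat a b c d e g u v) = mat4_one"
proof -
  have "u * (u' * x) = x" "v * (v' * x) = x" for x
    using assms by (metis mult.assoc mult_1_left)+
  with assms show ?thesis
    unfolding A4_mat_inv_def A4_mat_mult mat4_one_eq A4_mat_eq_iff
    by (simp add: algebra_simps mult.commute[of u' u] mult.commute[of v' v])
qed

lemma A4_mat_inv_in_carrier:
  assumes "u * u' = 1" "v * v' = 1"
  shows "A4_mat_inv a b c d e g u' v' \<in> A4_carrier"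
  using dvd_triv_right[of u' u] dvd_triv_right[of v' v] assms
  by (simp add: A4_mat_inv_def A4_mat_in_carrier_iff)

lemma carrier_A4: "carrier A4 = A4_carrier"
  by (simp add: A4_def)

lemma mult_A4: "x \<otimes>\<^bsub>A4\<^esub> y = mat4_mult x y"
  by (simp add: A4_def)

lemma group_A4: "group (A4 :: (nat \<Rightarrow> nat \<Rightarrow> 'a::comm_ring_1) monoid)"
proof (rule groupI)
  fix x y :: "nat \<Rightarrow> nat \<Rightarrow> 'a"
  assume "x \<in> carrier A4" "y \<in> carrier A4"
  then show "x \<otimes>\<^bsub>A4\<^esub> y \<in> carrier A4"
    unfolding carrier_A4 mult_A4
    by (elim A4_carrierE)
      (simp add: A4_mat_mult A4_mat_in_carrier_iff, metis dvdI mult_dvd_mono mult_1_left)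
next
  show "\<one>\<^bsub>A4\<^esub> \<in> carrier (A4 :: (nat \<Rightarrow> nat \<Rightarrow> 'a) monoid)"
    by (simp add: A4_def mat4_one_eq A4_mat_in_carrier_iff)
next
  fix x y z :: "nat \<Rightarrow> nat \<Rightarrow> 'a"
  assume "x \<in> carrier A4" "y \<in> carrier A4" "z \<in> carrier A4"
  then show "x \<otimes>\<^bsub>A4\<^esub> y \<otimes>\<^bsub>A4\<^esub> z = x \<otimes>\<^bsub>A4\<^esub> (y \<otimes>\<^bsub>A4\<^esub> z)"
    unfolding carrier_A4 mult_A4
    by (elim A4_carrierE) (simp add: A4_mat_mult A4_mat_eq_iff algebra_simps)
next
  fix x :: "nat \<Rightarrow> nat \<Rightarrow> 'a"
  assume "x \<in> carrier A4"
  then show "\<one>\<^bsub>A4\<^esub> \<otimes>\<^bsub>A4\<^esub> x = x"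
    unfolding carrier_A4 mult_A4 by (elim A4_carrierE) (simp add: A4_def mat4_one_eq A4_mat_mult)
  from \<open>x \<in> carrier A4\<close> obtain a b c d e g u v u' v'
    where x: "x = A4_mat a b c d e g u v" "u * u' = 1" "v * v' = 1"
    unfolding carrier_A4 by (rule A4_carrierE)
  then have "A4_mat_inv a b c d e g u' v' \<in> carrier A4"
    by (simp add: carrier_A4 A4_mat_inv_in_carrier)
  moreover have "A4_mat_inv a b c d e g u' v' \<otimes>\<^bsub>A4\<^esub> x = \<one>\<^bsub>A4\<^esub>"
    using x by (simp add: mult_A4 A4_mat_inv_mult) (simp add: A4_def)
  ultimately show "\<exists>y\<in>carrier A4. y \<otimes>\<^bsub>A4\<^esub> x = \<one>\<^bsub>A4\<^esub>" by blast
qed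

lemma inv_A4_unitriangular:
  "inv\<^bsub>A4\<^esub> (A4_mat a b c d e g 1 1) = (A4_mat_inv a b c d e g 1 1 :: nat \<Rightarrow> nat \<Rightarrow> 'a::comm_ring_1)"
proof (rule group.inv_equality[OF group_A4])
  show "A4_mat_inv a b c d e g 1 1 \<otimes>\<^bsub>A4\<^esub> A4_mat a b c d e g 1 1 = \<one>\<^bsub>A4\<^esub>"
    by (simp add: mult_A4 A4_mat_inv_mult) (simp add: A4_def)
  show "A4_mat a b c d e g 1 1 \<in> carrier A4" "A4_mat_inv a b c d e g 1 1 \<in> carrier A4"
    by (simp_all add: carrier_A4 A4_mat_in_carrier_iff A4_mat_inv_in_carrier)
qed

lemma carrier_U4: "carrier U4 = {A4_mat a b c d e g 1 1 | a b c d e g. True}"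
proof (intro equalityI subsetI)
  fix M :: "nat \<Rightarrow> nat \<Rightarrow> 'a"
  assume "M \<in> carrier U4"
  then have M: "M \<in> A4_carrier" "M 2 2 = 1" "M 3 3 = 1"
    by (simp_all add: U4_def A4_def)
  have "M = A4_mat (M 1 2) (M 1 3) (M 1 4) (M 2 3) (M 2 4) (M 3 4) 1 1"
    using A4_mat_entries[OF M(1)] unfolding M(2,3) .
  then show "M \<in> {A4_mat a b c d e g 1 1 | a b c d e g. True}"
    by blast
next
  fix M :: "nat \<Rightarrow> nat \<Rightarrow> 'a"
  assume "M \<in> {A4_mat a b c d e g 1 1 | a b c d e g. True}"
  then show "M \<in> carrier U4"
    by (auto simp: U4_def A4_def A4_mat_in_carrier_iff A4_mat_apply)
qed

lemma mult_U4: "x \<otimes>\<^bsub>U4\<^esub> y = mat4_mult x y"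
  by (simp add: U4_def A4_def)

lemma one_U4: "\<one>\<^bsub>U4\<^esub> = mat4_one"
  by (simp add: U4_def A4_def)

lemma subgroup_U4: "subgroup (carrier U4) (A4 :: (nat \<Rightarrow> nat \<Rightarrow> 'a::comm_ring_1) monoid)"
proof (rule group.subgroupI[OF group_A4])
  show "carrier U4 \<subseteq> carrier (A4 :: (nat \<Rightarrow> nat \<Rightarrow> 'a) monoid)"
    by (auto simp: carrier_U4 carrier_A4 A4_mat_in_carrier_iff)
  have "A4_mat 0 0 0 0 0 0 1 1 \<in> carrier (U4 :: (nat \<Rightarrow> nat \<Rightarrow> 'a) monoid)"
    unfolding carrier_U4 by blast
  then show "carrier (U4 :: (nat \<Rightarrow> nat \<Rightarrow> 'a) monoid) \<noteq> {}"
    by blast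
next
  fix x y :: "nat \<Rightarrow> nat \<Rightarrow> 'a"
  assume "x \<in> carrier U4"
  then show "inv\<^bsub>A4\<^esub> x \<in> carrier U4"
    by (auto simp: carrier_U4 inv_A4_unitriangular A4_mat_inv_def A4_mat_eq_iff)
  assume "y \<in> carrier U4"
  with \<open>x \<in> carrier U4\<close> show "x \<otimes>\<^bsub>A4\<^esub> y \<in> carrier U4"
    by (auto simp: carrier_U4 mult_A4 A4_mat_mult A4_mat_eq_iff)
qed

lemma inv_U4: "x \<in> carrier U4 \<Longrightarrow> inv\<^bsub>U4\<^esub> x = inv\<^bsub>A4\<^esub> x"
  using group.m_inv_consistent[OF group_A4 subgroup_U4] by (simp add: U4_def)

definition K4 :: "(nat \<Rightarrow> nat \<Rightarrow> 'a::comm_ring_1) set" where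
  "K4 = {A4_mat 0 b c 0 e 0 1 1 | b c e. True}"

lemma A4_mat_in_K4_iff:
  "A4_mat a b c d e g u v \<in> K4 \<longleftrightarrow> a = 0 \<and> d = 0 \<and> g = 0 \<and> u = 1 \<and> v = 1"
  by (auto simp: K4_def A4_mat_eq_iff)

lemma U4'_subset_K4: "U4' \<subseteq> K4"
proof
  fix x :: "nat \<Rightarrow> nat \<Rightarrow> 'a"
  assume "x \<in> U4'"
  then have "x \<in> generate U4 (derived_set U4 (carrier U4))"
    by (simp add: U4'_def derived_def)
  then show "x \<in> K4"
  proof induction
    case one
    then show ?case by (simp add: one_U4 mat4_one_eq A4_mat_in_K4_iff)
  next
    case (incl h)
    then show ?case
      by (auto simp: carrier_U4 inv_U4 mult_U4 inv_A4_unitriangular A4_mat_inv_def A4_mat_mult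
          A4_mat_in_K4_iff)
  next
    case (inv h)
    then have "h \<in> carrier U4" "h \<in> K4"
      by (auto simp: carrier_U4 inv_U4 mult_U4 inv_A4_unitriangular A4_mat_inv_def A4_mat_mult
          A4_mat_in_K4_iff A4_mat_eq_iff)
    then show ?case
      by (auto simp: inv_U4 K4_def inv_A4_unitriangular A4_mat_inv_def A4_mat_eq_iff)
  next
    case (eng h1 h2)
    then show ?case
      by (auto simp: K4_def mult_U4 A4_mat_mult A4_mat_eq_iff)
  qed
qed

lemma K4_subset_U4': "K4 \<subseteq> U4'"
proof
  fix x :: "nat \<Rightarrow> nat \<Rightarrow> 'a"
  assume "x \<in> K4"
  then obtain b c e where x: "x = A4_mat 0 b c 0 e 0 1 1"
    by (auto simp: K4_def)
  define D where "D = derived_set U4 (carrier (U4 :: (nat \<Rightarrow> nat \<Rightarrow> 'a) monoid))"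
  have commutator_in_D:
    "mat4_mult (mat4_mult (mat4_mult h1 h2) (inv\<^bsub>A4\<^esub> h1)) (inv\<^bsub>A4\<^esub> h2) \<in> D"
    if "h1 \<in> carrier U4" "h2 \<in> carrier U4" for h1 h2
    using that unfolding D_def by (auto simp: mult_U4 inv_U4)
  txt \<open>\<open>e\<^sub>1\<^sub>3(b)\<close>, \<open>e\<^sub>2\<^sub>4(e)\<close> and \<open>e\<^sub>1\<^sub>4(c)\<close> are the commutators of \<open>e\<^sub>1\<^sub>2(b)\<close> and \<open>e\<^sub>2\<^sub>3(1)\<close>,
    of \<open>e\<^sub>2\<^sub>3(e)\<close> and \<open>e\<^sub>3\<^sub>4(1)\<close>, and of \<open>e\<^sub>1\<^sub>2(c)\<close> and \<open>e\<^sub>2\<^sub>4(1)\<close>.\<close>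
  have "A4_mat 0 b 0 0 0 0 1 1 \<in> D"
    using commutator_in_D[of "A4_mat b 0 0 0 0 0 1 1" "A4_mat 0 0 0 1 0 0 1 1"]
    by (simp add: carrier_U4 inv_A4_unitriangular A4_mat_inv_def A4_mat_mult A4_mat_eq_iff)
  moreover have "A4_mat 0 0 0 0 e 0 1 1 \<in> D"
    using commutator_in_D[of "A4_mat 0 0 0 e 0 0 1 1" "A4_mat 0 0 0 0 0 1 1 1"]
    by (simp add: carrier_U4 inv_A4_unitriangular A4_mat_inv_def A4_mat_mult A4_mat_eq_iff)
  moreover have "A4_mat 0 0 c 0 0 0 1 1 \<in> D"
    using commutator_in_D[of "A4_mat c 0 0 0 0 0 1 1" "A4_mat 0 0 0 0 1 0 1 1"]
    by (simp add: carrier_U4 inv_A4_unitriangular A4_mat_inv_def A4_mat_mult A4_mat_eq_iff)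
  ultimately have
    "(A4_mat 0 b 0 0 0 0 1 1 \<otimes>\<^bsub>U4\<^esub> A4_mat 0 0 0 0 e 0 1 1) \<otimes>\<^bsub>U4\<^esub> A4_mat 0 0 c 0 0 0 1 1
       \<in> generate U4 D"
    by (intro generate.eng generate.incl)
  moreover have "x = (A4_mat 0 b 0 0 0 0 1 1 \<otimes>\<^bsub>U4\<^esub> A4_mat 0 0 0 0 e 0 1 1) \<otimes>\<^bsub>U4\<^esub> A4_mat 0 0 c 0 0 0 1 1"
    by (simp add: x mult_U4 A4_mat_mult)
  ultimately show "x \<in> U4'"
    by (simp add: U4'_def derived_def D_def)
qed

lemma U4'_eq_K4: "U4' = K4"
  using U4'_subset_K4 K4_subset_U4' by blast

section \<open>The quotient \<open>A\<^sub>4(R)/U\<^sub>4(R)'\<close> in coordinates\<close>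

type_synonym 'a coords = "'a \<times> 'a \<times> 'a \<times> 'a \<times> 'a"

definition coords :: "(nat \<Rightarrow> nat \<Rightarrow> 'a::comm_ring_1) \<Rightarrow> 'a coords" where
  "coords M = (M 1 2, M 2 3, M 3 4, M 2 2, M 3 3)"

fun coords_mult :: "'a::comm_ring_1 coords \<Rightarrow> 'a coords \<Rightarrow> 'a coords" where
  "coords_mult (a, d, g, u, v) (a', d', g', u', v') =
     (a' + a * u', u * d' + d * v', v * g' + g, u * u', v * v')"

definition A4_coords :: "'a::comm_ring_1 coords monoid" where
  "A4_coords = \<lparr>carrier = {(a, d, g, u, v). u dvd 1 \<and> v dvd 1}, monoid.mult = coords_mult,
     one = (0, 0, 0, 1, 1)\<rparr>"

lemma coords_A4_mat [simp]: "coords (A4_mat a b c d e g u v) = (a, d, g, u, v)"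
  by (simp add: coords_def A4_mat_def)

lemma group_A4_coords: "group (A4_coords :: 'a::comm_ring_1 coords monoid)"
proof (rule groupI)
  fix x y :: "'a coords"
  assume "x \<in> carrier A4_coords" "y \<in> carrier A4_coords"
  then show "x \<otimes>\<^bsub>A4_coords\<^esub> y \<in> carrier A4_coords"
    by (cases x, cases y) (auto simp: A4_coords_def intro: mult_dvd_mono[of _ 1 _ 1, simplified])
next
  show "\<one>\<^bsub>A4_coords\<^esub> \<in> carrier (A4_coords :: 'a coords monoid)"
    by (simp add: A4_coords_def)
next
  fix x y z :: "'a coords"
  show "x \<otimes>\<^bsub>A4_coords\<^esub> y \<otimes>\<^bsub>A4_coords\<^esub> z = x \<otimes>\<^bsub>A4_coords\<^esub> (y \<otimes>\<^bsub>A4_coords\<^esub> z)"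
    by (cases x, cases y, cases z) (simp add: A4_coords_def algebra_simps)
next
  fix x :: "'a coords"
  assume x: "x \<in> carrier A4_coords"
  then show "\<one>\<^bsub>A4_coords\<^esub> \<otimes>\<^bsub>A4_coords\<^esub> x = x"
    by (cases x) (simp add: A4_coords_def)
  obtain a d g u v where x_eq: "x = (a, d, g, u, v)"
    by (cases x)
  with x obtain u' v' where "u * u' = 1" "v * v' = 1"
    by (auto simp: A4_coords_def elim!: dvdE)
  then have "(- a * u', - u' * d * v', - v' * g, u', v') \<in> carrier A4_coords"
    "(- a * u', - u' * d * v', - v' * g, u', v') \<otimes>\<^bsub>A4_coords\<^esub> x = \<one>\<^bsub>A4_coords\<^esub>"
    by (simp_all add: A4_coords_def x_eq algebra_simps, metis dvd_triv_right mult.commute)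
  then show "\<exists>y\<in>carrier A4_coords. y \<otimes>\<^bsub>A4_coords\<^esub> x = \<one>\<^bsub>A4_coords\<^esub>"
    by blast
qed

lemma coords_hom: "coords \<in> hom A4 (A4_coords :: 'a::comm_ring_1 coords monoid)"
proof (rule homI)
  fix x y :: "nat \<Rightarrow> nat \<Rightarrow> 'a"
  assume x: "x \<in> carrier A4" and y: "y \<in> carrier A4"
  from x show "coords x \<in> carrier A4_coords"
    unfolding carrier_A4 by (elim A4_carrierE) (simp add: A4_coords_def, metis dvdI)
  from x y show "coords (x \<otimes>\<^bsub>A4\<^esub> y) = coords x \<otimes>\<^bsub>A4_coords\<^esub> coords y"
    unfolding carrier_A4 by (elim A4_carrierE) (simp add: mult_A4 A4_mat_mult A4_coords_def)
qed

lemma coords_onto: "coords ` carrier A4 = carrier (A4_coords :: 'a::comm_ring_1 coords monoid)"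
proof (intro equalityI subsetI)
  fix t :: "'a coords"
  assume "t \<in> coords ` carrier A4"
  then show "t \<in> carrier A4_coords"
    using coords_hom by (auto simp: hom_def)
next
  fix t :: "'a coords"
  assume "t \<in> carrier A4_coords"
  then obtain a d g u v where "t = (a, d, g, u, v)" "u dvd 1" "v dvd 1"
    by (auto simp: A4_coords_def)
  then have "t = coords (A4_mat a 0 0 d 0 g u v)" "A4_mat a 0 0 d 0 g u v \<in> carrier A4"
    by (simp_all add: carrier_A4 A4_mat_in_carrier_iff)
  then show "t \<in> coords ` carrier A4"
    by blast
qed

lemma group_hom_coords: "group_hom A4 (A4_coords :: 'a::comm_ring_1 coords monoid) coords"
  by (intro group_hom.intro group_hom_axioms.intro group_A4 group_A4_coords coords_hom)

lemma kernel_coords: "kernel A4 (A4_coords :: 'a::comm_ring_1 coords monoid) coords = U4'"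
proof -
  have "M \<in> kernel A4 A4_coords coords \<longleftrightarrow> M \<in> K4" for M :: "nat \<Rightarrow> nat \<Rightarrow> 'a"
  proof
    assume "M \<in> kernel A4 A4_coords coords"
    then have "M \<in> A4_carrier" "coords M = (0, 0, 0, 1, 1)"
      by (simp_all add: kernel_def carrier_A4 A4_coords_def)
    then show "M \<in> K4"
      by (elim A4_carrierE) (simp add: A4_mat_in_K4_iff)
  next
    assume "M \<in> K4"
    then show "M \<in> kernel A4 A4_coords coords"
      by (auto simp: K4_def kernel_def carrier_A4 A4_coords_def A4_mat_in_carrier_iff)
  qed
  then show ?thesis
    by (auto simp: U4'_eq_K4)
qed

definition A4bar_coords :: "(nat \<Rightarrow> nat \<Rightarrow> 'a::comm_ring_1) set \<Rightarrow> 'a coords" where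
  "A4bar_coords C = the_elem (coords ` C)"

lemma A4bar_coords_iso: "A4bar_coords \<in> iso A4bar (A4_coords :: 'a::comm_ring_1 coords monoid)"
  unfolding A4bar_def A4bar_coords_def[abs_def] kernel_coords[symmetric]
  by (rule group_hom.FactGroup_iso_set[OF group_hom_coords coords_onto])

lemma group_A4bar: "group (A4bar :: (nat \<Rightarrow> nat \<Rightarrow> 'a::comm_ring_1) set monoid)"
  unfolding A4bar_def kernel_coords[symmetric]
  by (rule normal.factorgroup_is_group[OF group_hom.normal_kernel[OF group_hom_coords]])

lemma A4bar_coords_rcoset:
  "M \<in> carrier A4 \<Longrightarrow> A4bar_coords (U4' #>\<^bsub>A4\<^esub> M) = coords (M :: nat \<Rightarrow> nat \<Rightarrow> 'a::comm_ring_1)"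
  using group_hom.image_kernel_rcoset[OF group_hom_coords, of M]
  by (simp add: A4bar_coords_def kernel_coords)

section \<open>Root subgroups and their automorphic images\<close>

abbreviation roots :: "(nat \<times> nat) set" where
  "roots \<equiv> {(1, 2), (2, 3), (3, 4)}"

definition root :: "nat \<times> nat \<Rightarrow> 'a::comm_ring_1 \<Rightarrow> 'a coords" where
  "root p r = (if p = (1, 2) then (r, 0, 0, 1, 1) else if p = (2, 3) then (0, r, 0, 1, 1)
     else (0, 0, r, 1, 1))"

definition root_subgroup :: "nat \<times> nat \<Rightarrow> 'a::comm_ring_1 coords set" where
  "root_subgroup p = range (root p)"

definition unipotent_coords :: "'a::comm_ring_1 coords set" where
  "unipotent_coords = {(a, d, g, 1, 1) | a d g. True}"

lemma inj_root: "inj (root p)"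
  by (auto simp: inj_def root_def)

lemma root_in_carrier: "root p r \<in> carrier A4_coords"
  by (simp add: root_def A4_coords_def)

lemma root_subgroup_subset: "root_subgroup p \<subseteq> carrier A4_coords"
  unfolding root_subgroup_def using root_in_carrier by blast

lemma root_add: "root p (r + s) = root p r \<otimes>\<^bsub>A4_coords\<^esub> root p s"
  by (simp add: root_def A4_coords_def add.commute)

lemma root_subgroup_inj:
  assumes "p \<in> roots" "q \<in> roots" "root_subgroup p = (root_subgroup q :: 'a::comm_ring_1 coords set)"
  shows "p = q"
proof -
  have "root p (1::'a) \<in> root_subgroup q"
    using assms(3) by (auto simp: root_subgroup_def)
  with assms(1,2) show "p = q"
    by (auto simp: root_subgroup_def root_def)
qed

lemma coords_elem: "p \<in> roots \<Longrightarrow> coords (elem (fst p) (snd p) r) = root p r"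
  by (auto simp: elem_eq root_def simp del: One_nat_def)

lemma elem_in_carrier: "p \<in> roots \<Longrightarrow> elem (fst p) (snd p) r \<in> carrier A4"
  by (auto simp: elem_eq carrier_A4 A4_mat_in_carrier_iff simp del: One_nat_def)

lemma conj_commuting_A4_coords:
  "conj_commuting (A4_coords :: 'a::idom coords monoid) = unipotent_coords"
proof (intro equalityI subsetI)
  fix x :: "'a coords"
  assume x: "x \<in> conj_commuting A4_coords"
  obtain a d g u v where x_eq: "x = (a, d, g, u, v)"
    by (cases x)
  with x have "u dvd 1" "v dvd 1"
    by (auto simp: conj_commuting_def A4_coords_def)
  txt \<open>\<open>y\<close> is the conjugate of \<open>x\<close> by \<open>(1, 0, 1, 1, 1)\<close>; they commute only if
    \<open>(u - 1)\<^sup>2 = (v - 1)\<^sup>2 = 0\<close>.\<close>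
  define y :: "'a coords" where "y = (a + u - 1, d, g + 1 - v, u, v)"
  have "y \<otimes>\<^bsub>A4_coords\<^esub> (1, 0, 1, 1, 1) = (1, 0, 1, 1, 1) \<otimes>\<^bsub>A4_coords\<^esub> x"
    "y \<in> carrier A4_coords" "(1, 0, 1, 1, 1) \<in> carrier A4_coords"
    using \<open>u dvd 1\<close> \<open>v dvd 1\<close> by (simp_all add: x_eq y_def A4_coords_def algebra_simps)
  then have "x \<otimes>\<^bsub>A4_coords\<^esub> y = y \<otimes>\<^bsub>A4_coords\<^esub> x"
    using x unfolding conj_commuting_def by blast
  then have "(u - 1) * (u - 1) = 0" "(v - 1) * (v - 1) = 0"
    by (auto simp: x_eq y_def A4_coords_def algebra_simps)
  then show "x \<in> unipotent_coords"
    by (simp add: x_eq unipotent_coords_def)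
next
  fix x :: "'a coords"
  assume "x \<in> unipotent_coords"
  then obtain a d g where x_eq: "x = (a, d, g, 1, 1)"
    by (auto simp: unipotent_coords_def)
  have "x \<otimes>\<^bsub>A4_coords\<^esub> y = y \<otimes>\<^bsub>A4_coords\<^esub> x"
    if "h \<in> carrier A4_coords" "y \<in> carrier A4_coords"
      "y \<otimes>\<^bsub>A4_coords\<^esub> h = h \<otimes>\<^bsub>A4_coords\<^esub> x" for h y :: "'a coords"
  proof -
    obtain p q s u v where h: "h = (p, q, s, u, v)"
      by (cases h)
    obtain y1 y2 y3 yu yv where y: "y = (y1, y2, y3, yu, yv)"
      by (cases y)
    have "u \<noteq> 0" "v \<noteq> 0"
      using that(1) by (auto simp: h A4_coords_def)
    with that(3) have "yu = 1" "yv = 1"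
      by (auto simp: A4_coords_def h y x_eq)
    then show ?thesis
      by (simp add: A4_coords_def x_eq y algebra_simps)
  qed
  then show "x \<in> conj_commuting A4_coords"
    by (auto simp: conj_commuting_def A4_coords_def x_eq)
qed

lemma mem_centralizer_A4_coords_iff:
  "(a, d, g, 1, 1) \<in> centralizer A4_coords (p, q, s, u, v) \<longleftrightarrow>
   (a = 0 \<or> u = (1::'a::idom)) \<and> (d = 0 \<or> v = u) \<and> (g = 0 \<or> v = 1)"
proof -
  have "(a, d, g, 1, 1) \<in> centralizer A4_coords (p, q, s, u, v) \<longleftrightarrow>
      a * u = a * 1 \<and> d * v = d * u \<and> g * v = g * 1"
    by (auto simp: centralizer_def A4_coords_def algebra_simps)
  also have "\<dots> \<longleftrightarrow> (a = 0 \<or> u = 1) \<and> (d = 0 \<or> v = u) \<and> (g = 0 \<or> v = 1)"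
    by (simp only: mult_cancel_left)
  finally show ?thesis .
qed

lemma unipotent_centralizer_eq:
  "unipotent_coords \<inter> centralizer A4_coords (p, q, s, u, v) =
    {(a, d, g, 1, 1) | a d g. (a = 0 \<or> u = (1::'a::idom)) \<and> (d = 0 \<or> v = u) \<and> (g = 0 \<or> v = 1)}"
  by (auto simp: unipotent_coords_def mem_centralizer_A4_coords_iff)

lemma unipotent_centralizer_cases:
  assumes "h \<in> carrier (A4_coords :: 'a::idom coords monoid)"
  shows "unipotent_coords \<inter> centralizer A4_coords h \<in> {unipotent_coords,
    root_subgroup (1, 2), root_subgroup (2, 3), root_subgroup (3, 4), {\<one>\<^bsub>A4_coords\<^esub>}}"
proof -
  obtain p q s u v where h: "h = (p, q, s, u, v)"
    by (cases h)
  have eq: "unipotent_coords \<inter> centralizer A4_coords h =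
      {(a, d, g, 1, 1) | a d g. (a = 0 \<or> u = 1) \<and> (d = 0 \<or> v = u) \<and> (g = 0 \<or> v = 1)}"
    unfolding h by (rule unipotent_centralizer_eq)
  consider "u = 1" "v = 1" | "u = 1" "v \<noteq> 1" | "u \<noteq> 1" "v = u" | "u \<noteq> 1" "v \<noteq> u" "v = 1"
    | "u \<noteq> 1" "v \<noteq> u" "v \<noteq> 1"
    by blast
  then show ?thesis
  proof cases
    case 1
    then have "unipotent_coords \<inter> centralizer A4_coords h = unipotent_coords"
      unfolding eq by (simp add: unipotent_coords_def)
    then show ?thesis by simp
  next
    case 2
    then have "unipotent_coords \<inter> centralizer A4_coords h = root_subgroup (1, 2)"
      unfolding eq by (auto simp: root_subgroup_def root_def)
    then show ?thesis by simp
  next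
    case 3
    then have "unipotent_coords \<inter> centralizer A4_coords h = root_subgroup (2, 3)"
      unfolding eq by (auto simp: root_subgroup_def root_def)
    then show ?thesis by simp
  next
    case 4
    then have "unipotent_coords \<inter> centralizer A4_coords h = root_subgroup (3, 4)"
      unfolding eq by (auto simp: root_subgroup_def root_def)
    then show ?thesis by simp
  next
    case 5
    then have "unipotent_coords \<inter> centralizer A4_coords h = {\<one>\<^bsub>A4_coords\<^esub>}"
      unfolding eq by (auto simp: A4_coords_def)
    then show ?thesis by simp
  qed
qed

lemma root_subgroup_eq_centralizer:
  assumes "w dvd 1" "w \<noteq> (1::'a::idom)" "p \<in> roots"
  shows "\<exists>h\<in>carrier (A4_coords :: 'a coords monoid).
    unipotent_coords \<inter> centralizer A4_coords h = root_subgroup p"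
proof -
  have carrier: "(0, 0, 0, 1, w) \<in> carrier A4_coords" "(0, 0, 0, w, w) \<in> carrier A4_coords"
    "(0, 0, 0, w, 1) \<in> carrier (A4_coords :: 'a coords monoid)"
    using assms(1) by (simp_all add: A4_coords_def)
  have centralizer:
    "unipotent_coords \<inter> centralizer A4_coords (0, 0, 0, 1, w) = root_subgroup (1, 2)"
    "unipotent_coords \<inter> centralizer A4_coords (0, 0, 0, w, w) = root_subgroup (2, 3)"
    "unipotent_coords \<inter> centralizer A4_coords (0, 0, 0, w, 1) = root_subgroup (3, 4)"
    unfolding unipotent_centralizer_eq using assms(2) by (auto simp: root_subgroup_def root_def)
  from assms(3) consider "p = (1, 2)" | "p = (2, 3)" | "p = (3, 4)"
    by blast
  then show ?thesis
  proof cases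
    case 1
    show ?thesis unfolding 1 using carrier(1) centralizer(1) by blast
  next
    case 2
    show ?thesis unfolding 2 using carrier(2) centralizer(2) by blast
  next
    case 3
    show ?thesis unfolding 3 using carrier(3) centralizer(3) by blast
  qed
qed

lemma unipotent_coords_subset: "unipotent_coords \<subseteq> carrier A4_coords"
  by (auto simp: unipotent_coords_def A4_coords_def)

lemma iso_image_root_subgroup_centralizer:
  fixes f :: "'a::idom coords \<Rightarrow> 'a coords"
  assumes f: "f \<in> iso A4_coords A4_coords"
    and w: "w dvd 1" "w \<noteq> (1::'a)" and p: "p \<in> roots"
  shows "\<exists>h\<in>carrier A4_coords. f ` root_subgroup p = unipotent_coords \<inter> centralizer A4_coords h"
proof -
  have monoid: "monoid (A4_coords :: 'a coords monoid)"
    using group_A4_coords by (rule group.is_monoid)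
  have inj: "inj_on f (carrier A4_coords)"
    using f by (simp add: iso_iff)
  obtain h :: "'a coords" where h: "h \<in> carrier A4_coords"
    "unipotent_coords \<inter> centralizer A4_coords h = root_subgroup p"
    using root_subgroup_eq_centralizer[OF w p] by blast
  have "f ` root_subgroup p = f ` unipotent_coords \<inter> f ` centralizer A4_coords h"
    using inj_on_image_Int[OF inj unipotent_coords_subset, of "centralizer A4_coords h"] h(2)
    by (auto simp: centralizer_def)
  also have "\<dots> = unipotent_coords \<inter> centralizer A4_coords (f h)"
    using iso_image_conj_commuting[OF monoid f] iso_image_centralizer[OF monoid f h(1)]
    by (simp add: conj_commuting_A4_coords)
  finally show ?thesis
    using f h(1) by (auto simp: iso_iff)
qed

lemma iso_image_root_subgroup:
  fixes f :: "'a::idom coords \<Rightarrow> 'a coords"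
  assumes f: "f \<in> iso A4_coords A4_coords"
    and w: "w dvd 1" "w \<noteq> (1::'a)" and p: "p \<in> roots"
  shows "\<exists>q\<in>roots. f ` root_subgroup p = root_subgroup q"
proof -
  have inj: "inj_on f (carrier A4_coords)"
    using f by (simp add: iso_iff)
  obtain h where h: "h \<in> carrier A4_coords"
    "f ` root_subgroup p = unipotent_coords \<inter> centralizer A4_coords h"
    using iso_image_root_subgroup_centralizer[OF f w p] by blast
  note cases = unipotent_centralizer_cases[OF h(1), folded h(2)]
  have "f ` root_subgroup p \<noteq> unipotent_coords"
  proof
    assume "f ` root_subgroup p = unipotent_coords"
    also have "\<dots> = f ` unipotent_coords"
      using iso_image_conj_commuting[OF group.is_monoid[OF group_A4_coords] f]
      by (simp add: conj_commuting_A4_coords)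
    finally have "root_subgroup p = (unipotent_coords :: 'a coords set)"
      using inj_on_image_eq_iff[OF inj root_subgroup_subset unipotent_coords_subset] by simp
    moreover have "(1, 1, 1, 1, 1) \<in> (unipotent_coords :: 'a coords set)"
      "(1, 1, 1, 1, 1) \<notin> (root_subgroup p :: 'a coords set)"
      using p by (auto simp: unipotent_coords_def root_subgroup_def root_def)
    ultimately show False
      by simp
  qed
  moreover have "f ` root_subgroup p \<noteq> {\<one>\<^bsub>A4_coords\<^esub>}"
  proof
    assume "f ` root_subgroup p = {\<one>\<^bsub>A4_coords\<^esub>}"
    then have "f (root p r) = \<one>\<^bsub>A4_coords\<^esub>" for r
      unfolding root_subgroup_def by blast
    then have "f (root p 0) = f (root p 1)"
      by simp
    then have "root p 0 = root p (1::'a)"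
      by (rule inj_onD[OF inj _ root_in_carrier root_in_carrier])
    then have "(0::'a) = 1"
      by (rule injD[OF inj_root])
    then show False
      by simp
  qed
  ultimately show ?thesis
    using cases by auto
qed

lemma aut_permutes_root_subgroups:
  fixes f :: "'a::idom coords \<Rightarrow> 'a coords"
  assumes f: "f \<in> iso A4_coords A4_coords" and w: "w dvd 1" "w \<noteq> (1::'a)"
  obtains \<sigma> where "\<sigma> permutes roots" "\<And>p. p \<in> roots \<Longrightarrow> f ` root_subgroup p = root_subgroup (\<sigma> p)"
proof -
  have "\<forall>p\<in>roots. \<exists>q. q \<in> roots \<and> f ` root_subgroup p = root_subgroup q"
    using iso_image_root_subgroup[OF f w] by blast
  then obtain \<tau> where \<tau>: "\<forall>p\<in>roots. \<tau> p \<in> roots \<and> f ` root_subgroup p = root_subgroup (\<tau> p)"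
    by (rule bchoice[THEN exE])
  define \<sigma> where "\<sigma> p = (if p \<in> roots then \<tau> p else p)" for p
  have \<sigma>: "\<sigma> p \<in> roots" "f ` root_subgroup p = root_subgroup (\<sigma> p)" if "p \<in> roots" for p
    unfolding \<sigma>_def if_P[OF that] using \<tau> that by blast+
  have inj: "inj_on \<sigma> roots"
  proof (rule inj_onI)
    fix p p'
    assume "p \<in> roots" "p' \<in> roots" "\<sigma> p = \<sigma> p'"
    then have "f ` root_subgroup p = f ` root_subgroup p'"
      using \<sigma> by metis
    moreover have "inj_on f (carrier A4_coords)"
      using f by (simp add: iso_iff)
    ultimately have "root_subgroup p = (root_subgroup p' :: 'a coords set)"
      using inj_on_image_eq_iff[OF _ root_subgroup_subset root_subgroup_subset] by blast
    then show "p = p'"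
      using root_subgroup_inj \<open>p \<in> roots\<close> \<open>p' \<in> roots\<close> by blast
  qed
  have "finite roots" "\<sigma> ` roots \<subseteq> roots"
    using \<sigma> by auto
  then have "\<sigma> ` roots = roots"
    using inj by (rule endo_inj_surj)
  with inj have "bij_betw \<sigma> roots roots"
    by (simp add: bij_betw_def)
  then have "\<sigma> permutes roots"
    by (rule bij_imp_permutes) (simp add: \<sigma>_def)
  with \<sigma>(2) show thesis
    using that by blast
qed

lemma iso_restrict_root_subgroup:
  fixes f :: "'a::comm_ring_1 coords \<Rightarrow> 'a coords"
  assumes f: "f \<in> iso A4_coords A4_coords" and image: "f ` root_subgroup p = root_subgroup q"
  defines "\<Phi> \<equiv> \<lambda>r. inv_into UNIV (root q) (f (root p r))"
  shows "f (root p r) = root q (\<Phi> r)" "\<Phi> (x + y) = \<Phi> x + \<Phi> y" "bij \<Phi>"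
proof -
  have inj_f: "inj_on f (carrier A4_coords)"
    using f by (simp add: iso_iff)
  show f_root: "f (root p r) = root q (\<Phi> r)" for r
  proof -
    have "f (root p r) \<in> range (root q)"
      using image unfolding root_subgroup_def by blast
    then show ?thesis
      by (simp add: \<Phi>_def f_inv_into_f)
  qed
  have "root q (\<Phi> (x + y)) = f (root p x \<otimes>\<^bsub>A4_coords\<^esub> root p y)"
    by (simp add: f_root[symmetric] root_add)
  also have "\<dots> = f (root p x) \<otimes>\<^bsub>A4_coords\<^esub> f (root p y)"
    using hom_mult[OF iso_imp_homomorphism[OF f] root_in_carrier root_in_carrier] .
  also have "\<dots> = root q (\<Phi> x + \<Phi> y)"
    by (simp add: f_root root_add)
  finally show "\<Phi> (x + y) = \<Phi> x + \<Phi> y"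
    by (rule injD[OF inj_root])
  have "bij_betw (root p) UNIV (root_subgroup p)" "bij_betw (root q) UNIV (root_subgroup q)"
    by (simp_all add: root_subgroup_def inj_on_imp_bij_betw[OF inj_root])
  moreover have "bij_betw f (root_subgroup p) (root_subgroup q)"
    using image inj_on_subset[OF inj_f root_subgroup_subset] by (simp add: bij_betw_def)
  ultimately have "bij_betw (inv_into UNIV (root q) \<circ> f \<circ> root p) UNIV UNIV"
    by (meson bij_betw_trans bij_betw_inv_into)
  then show "bij \<Phi>"
    by (simp add: \<Phi>_def comp_def)
qed

lemma elem_bar_in_carrier: "p \<in> roots \<Longrightarrow> elem_bar (fst p) (snd p) r \<in> carrier A4bar"
  by (simp add: elem_bar_def A4bar_def carrier_FactGroup elem_in_carrier)

lemma A4bar_coords_elem_bar: "p \<in> roots \<Longrightarrow> A4bar_coords (elem_bar (fst p) (snd p) r) = root p r"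
  by (simp add: elem_bar_def A4bar_coords_rcoset elem_in_carrier coords_elem)

lemma A4bar_aut_coords:
  fixes \<phi> :: "(nat \<Rightarrow> nat \<Rightarrow> 'a::comm_ring_1) set \<Rightarrow> (nat \<Rightarrow> nat \<Rightarrow> 'a) set"
  assumes \<phi>: "\<phi> \<in> iso A4bar A4bar"
  defines "f \<equiv> A4bar_coords \<circ> \<phi> \<circ> inv_into (carrier A4bar) A4bar_coords"
  shows "f \<in> iso A4_coords A4_coords"
    and "p \<in> roots \<Longrightarrow> q \<in> roots \<Longrightarrow> f (root p r) = root q s \<Longrightarrow>
      \<phi> (elem_bar (fst p) (snd p) r) = elem_bar (fst q) (snd q) s"
proof -
  have \<psi>: "A4bar_coords \<in> iso A4bar (A4_coords :: 'a coords monoid)"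
    by (rule A4bar_coords_iso)
  then have inj: "inj_on A4bar_coords (carrier (A4bar :: (nat \<Rightarrow> nat \<Rightarrow> 'a) set monoid))"
    by (simp add: iso_iff)
  show "f \<in> iso A4_coords A4_coords"
    unfolding f_def by (rule iso_transport_aut[OF group_A4bar \<psi> \<phi>])
  assume p: "p \<in> roots" and q: "q \<in> roots" and f_root: "f (root p r) = root q s"
  have \<phi>_elem_bar: "\<phi> (elem_bar (fst p) (snd p) r) \<in> carrier A4bar"
    using \<phi> elem_bar_in_carrier[OF p] by (auto simp: iso_iff)
  have "A4bar_coords (\<phi> (elem_bar (fst p) (snd p) r)) =
      f (A4bar_coords (elem_bar (fst p) (snd p) r))"
    by (simp add: f_def inv_into_f_f[OF inj elem_bar_in_carrier[OF p]])
  also have "\<dots> = A4bar_coords (elem_bar (fst q) (snd q) s)"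
    by (simp only: A4bar_coords_elem_bar[OF p] A4bar_coords_elem_bar[OF q] f_root)
  finally show "\<phi> (elem_bar (fst p) (snd p) r) = elem_bar (fst q) (snd q) s"
    using inj_onD[OF inj _ \<phi>_elem_bar elem_bar_in_carrier[OF q]] by blast
qed

theorem mainTheorem11:
  fixes \<phi> :: "(nat \<Rightarrow> nat \<Rightarrow> 'a::idom) set \<Rightarrow> (nat \<Rightarrow> nat \<Rightarrow> 'a) set"
  assumes "\<exists>u::'a. u dvd 1 \<and> u \<noteq> 1"
    and "\<phi> \<in> iso A4bar A4bar"
  shows "\<exists>(\<sigma> :: nat \<times> nat \<Rightarrow> nat \<times> nat) (\<Phi> :: nat \<times> nat \<Rightarrow> 'a \<Rightarrow> 'a).
           \<sigma> permutes {(1,2),(2,3),(3,4)}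
         \<and> (\<forall>p\<in>{(1,2),(2,3),(3,4)}. bij (\<Phi> p) \<and> (\<forall>x y. \<Phi> p (x + y) = \<Phi> p x + \<Phi> p y))
         \<and> (\<forall>i j. (i, j) \<in> {(1,2),(2,3),(3,4)} \<longrightarrow>
               (\<forall>r. \<phi> (elem_bar i j r) = elem_bar (fst (\<sigma> (i, j))) (snd (\<sigma> (i, j))) (\<Phi> (i, j) r)))"
proof -
  obtain w :: 'a where w: "w dvd 1" "w \<noteq> 1"
    using assms(1) by blast
  define f where "f = A4bar_coords \<circ> \<phi> \<circ> inv_into (carrier A4bar) A4bar_coords"
  note f = A4bar_aut_coords[OF assms(2), folded f_def]
  obtain \<sigma> where \<sigma>: "\<sigma> permutes roots" "\<And>p. p \<in> roots \<Longrightarrow> f ` root_subgroup p = root_subgroup (\<sigma> p)"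
    using aut_permutes_root_subgroups[OF f(1) w] by blast
  define \<Phi> where "\<Phi> p r = inv_into UNIV (root (\<sigma> p)) (f (root p r))" for p r
  note \<Phi> = iso_restrict_root_subgroup[OF f(1) \<sigma>(2), folded \<Phi>_def]
  have elem_bar_image: "\<phi> (elem_bar i j r) = elem_bar (fst (\<sigma> (i, j))) (snd (\<sigma> (i, j))) (\<Phi> (i, j) r)"
    if "(i, j) \<in> roots" for i j r
    using f(2)[OF that _ \<Phi>(1)[OF that]] permutes_in_image[OF \<sigma>(1)] that by simp
  show ?thesis
  proof (intro exI conjI)
    show "\<sigma> permutes roots"
      by (rule \<sigma>(1))
    show "\<forall>p\<in>roots. bij (\<Phi> p) \<and> (\<forall>x y. \<Phi> p (x + y) = \<Phi> p x + \<Phi> p y)"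
      using \<Phi>(2,3) by blast
  qed (use elem_bar_image in blast)
qed

end
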